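(* In the setting below, with all parameters other than $S$ fixed, $$\lim_{S\to\infty}\bar P_{\mathrm{out}}=K\sum_{n=0}^\infty\frac{(m)_n\delta^n(2b)^{1+n}}{(n!)^2}\gamma\!\left(1+n,\frac{w_1a^\alpha}{2b}\right).$$ Setting: $r_{\mathrm{e}},a>0$; for $S>0$ the satellite positions form a homogeneous Poisson point process on the sphere of radius $r_{\mathrm{e}}+a$ centered at $O$ with intensity $S/(4\pi(r_{\mathrm{e}}+a)^2)$; a terminal sits at a fixed point $u$ with $|u|=r_{\mathrm{e}}$. With $\theta_{\mathrm{min}}$, $\omega_{\mathrm{th}}>0$ let $d_{\mathrm{max}}=\sqrt{r_{\mathrm{e}}^2\sin^2\theta_{\mathrm{min}}+a^2+2r_{\mathrm{e}}a}-r_{\mathrm{e}}\sin\theta_{\mathrm{min}}$, $\psi_{\mathrm{th}}=\sin^{-1}\!\left(\frac{r_{\mathrm{e}}+a}{r_{\mathrm{e}}}\sin\omega_{\mathrm{th}}\right)-\omega_{\mathrm{th}}$, $d_{\mathrm{th}}=\sqrt{r_{\mathrm{e}}^2+(r_{\mathrm{e}}+a)^2-2r_{\mathrm{e}}(r_{\mathrm{e}}+a)\cos\psi_{\mathrm{th}}}$, with $a<d_{\mathrm{th}}\le d_{\mathrm{max}}$. Let $s_0$ be the nearest satellite, at distance $d_{s_0}$. Let $h$ be independent of the satellite positions with CDF $F_h(x)=K\sum_{n\ge0}\frac{(m)_n\delta^n(2b)^{1+n}}{(n!)^2}\gamma(1+n,\frac{x}{2b})$, where $b,m,\Omega>0$,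 $K=\left(\frac{2bm}{2bm+\Omega}\right)^m/(2b)$, $\delta=\frac{\Omega/(2bm+\Omega)}{2b}$. For positive constants $P,g,G_{\mathrm{t}}^{\mathrm{ml}},G_{\mathrm{t}}^{\mathrm{sl}},G_{\mathrm{r}},N_0,W,f_{\mathrm{c}},c,\alpha$ and $R\ge0$, let $\gamma_{s_0}=\frac{PgG_{\mathrm{t}}G_{\mathrm{r}}h(c/(4\pi f_{\mathrm{c}}))^2d_{s_0}^{-\alpha}}{N_0W}$ with $G_{\mathrm{t}}=G_{\mathrm{t}}^{\mathrm{ml}}$ if $d_{s_0}\le d_{\mathrm{th}}$ and $G_{\mathrm{t}}^{\mathrm{sl}}$ otherwise; $\bar P_{\mathrm{out}}=\mathbb{P}[\log_2(1+\gamma_{s_0})<R\mid d_{s_0}\le d_{\mathrm{max}}]$; and $w_1=\frac{16\pi^2f_{\mathrm{c}}^2N_0W(2^R-1)}{Pgc^2G_{\mathrm{t}}^{\mathrm{ml}}G_{\mathrm{r}}}$.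
   Context: $\gamma(s,x)=\int_0^xt^{s-1}e^{-t}dt$ is the lower incomplete Gamma function and $(x)_n=\Gamma(x+n)/\Gamma(x)$. $\bar P_{\mathrm{out}}$ is the paper's Poisson-limit approximation of the outage probability of a system of $S$ satellites, defined as the outage probability when the satellite positions form a homogeneous Poisson point process with mean number $S$ on the sphere; $F_h$ is the shadowed-Rician fading CDF. The right-hand side equals $F_h(w_1a^\alpha)$. *)

theory Defs
  imports "HOL-Probability.Probability"
begin

text \<open>Lower incomplete Gamma function: integral of t^(s-1) e^(-t) over [0,x]
  (equals 0 for x < 0).\<close>
definition lower_inc_gamma :: "real \<Rightarrow> real \<Rightarrow> real" where
  "lower_inc_gamma s x = (LINT t:{0..x}|lborel. t powr (s - 1) * exp (- t))"

definition sr_K :: "real \<Rightarrow> real \<Rightarrow> real \<Rightarrow> real" where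
  "sr_K b m \<Omega> = (2 * b * m / (2 * b * m + \<Omega>)) powr m / (2 * b)"

definition sr_delta :: "real \<Rightarrow> real \<Rightarrow> real \<Rightarrow> real" where
  "sr_delta b m \<Omega> = (\<Omega> / (2 * b * m + \<Omega>)) / (2 * b)"

definition sr_cdf :: "real \<Rightarrow> real \<Rightarrow> real \<Rightarrow> real \<Rightarrow> real" where
  "sr_cdf b m \<Omega> x = sr_K b m \<Omega> *
     (\<Sum>n. pochhammer m n * sr_delta b m \<Omega> ^ n * (2 * b) ^ (1 + n) / (fact n)\<^sup>2
            * lower_inc_gamma (1 + real n) (x / (2 * b)))"

text \<open>Uniform probability distribution on the sphere of radius rho centred at the
  origin of R^3: radial projection of the uniform distribution on the unit ball.\<close>
definition sphere_unif :: "real \<Rightarrow> (real^3) measure" where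
  "sphere_unif \<rho> = distr (uniform_measure lborel (cball 0 1)) borel (\<lambda>x. (\<rho> / norm x) *\<^sub>R x)"

definition nearest_dist :: "real^3 \<Rightarrow> nat \<Rightarrow> (nat \<Rightarrow> real^3) \<Rightarrow> real" where
  "nearest_dist u n x = Min ((\<lambda>i. dist (x i) u) ` {..<n})"

text \<open>Probability of an event E (depending on the number n of points, the points x,
  and the fading h) when the points form a homogeneous Poisson point process with mean
  number S on the sphere of radius rho (standard construction: Poisson(S) many i.i.d.
  uniform points) and h is independent with distribution Mh.\<close>
definition ppp_prob :: "real \<Rightarrow> real \<Rightarrow> real measure \<Rightarrow>
    (nat \<Rightarrow> (nat \<Rightarrow> real^3) \<Rightarrow> real \<Rightarrow> bool) \<Rightarrow> real" where
  "ppp_prob S \<rho> Mh E =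
     (\<Sum>n. S ^ n / fact n * exp (- S) *
        measure (PiM {..<n} (\<lambda>_. sphere_unif \<rho>) \<Otimes>\<^sub>M Mh)
          {p \<in> space (PiM {..<n} (\<lambda>_. sphere_unif \<rho>) \<Otimes>\<^sub>M Mh). E n (fst p) (snd p)})"

end

theory Submission
  imports Defs
begin

text \<open>
  The terminal is at distance exactly \<open>a\<close> from the satellite sphere, so \<open>d\<^sub>s\<^sub>0 \<ge> a\<close>, and a
  satellite lands in the cap within distance \<open>t > a\<close> of the terminal with positive probability
  \<open>q(t)\<close>. For a Poisson process of mean \<open>S\<close> the cap is empty with probability \<open>exp (-S q(t))\<close>,
  which vanishes as \<open>S \<rightarrow> \<infinity>\<close>: the nearest satellite is eventually in the main lobe at
  distance between \<open>a\<close> and \<open>t\<close>. There the outage event is \<open>h < w\<^sub>1 d\<^sub>s\<^sub>0\<^sup>\<alpha>\<close>, so the outage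
  probability is squeezed between \<open>F\<^sub>h(w\<^sub>1 a\<^sup>\<alpha>)\<close> and \<open>F\<^sub>h(w\<^sub>1 t\<^sup>\<alpha>)\<close> up to the void probability;
  letting \<open>t \<rightarrow> a\<^sup>+\<close> and using right-continuity of \<open>F\<^sub>h\<close> gives the limit.
\<close>

subsection \<open>Uniform distribution on a sphere\<close>

lemma emeasure_lborel_unit_cball:
  "emeasure lborel (cball (0::real^3) 1) \<noteq> 0" "emeasure lborel (cball (0::real^3) 1) \<noteq> \<infinity>"
  using content_cball_pos[of 1 "0::real^3"] emeasure_lborel_cball_finite[of "0::real^3" 1]
  by (auto simp: measure_def)

lemma prob_space_sphere_unif: "prob_space (sphere_unif \<rho>)"
  unfolding sphere_unif_def
  by (intro prob_space.prob_space_distr prob_space_uniform_measure emeasure_lborel_unit_cball) simp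

lemma sets_sphere_unif [simp]: "sets (sphere_unif \<rho>) = sets borel"
  by (simp add: sphere_unif_def)

lemma radial_projection_vimage_borel:
  "A \<in> sets borel \<Longrightarrow> (\<lambda>x::'a::euclidean_space. (\<rho> / norm x) *\<^sub>R x) -` A \<in> sets borel"
  using measurable_sets_borel[of "\<lambda>x::'a. (\<rho> / norm x) *\<^sub>R x" borel A] by simp

lemma measure_sphere_unif:
  assumes "A \<in> sets borel"
  shows "measure (sphere_unif \<rho>) A =
    measure lborel (cball 0 1 \<inter> (\<lambda>x. (\<rho> / norm x) *\<^sub>R x) -` A) / measure lborel (cball (0::real^3) 1)"
  using assms emeasure_lborel_unit_cball radial_projection_vimage_borel[OF assms]
  unfolding sphere_unif_def by (simp add: measure_distr)

lemma sphere_point_within_gap_eq: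
  fixes u y :: "'a::real_inner"
  assumes "norm u = r" "r > 0" "norm y = r + a" "dist y u \<le> a"
  shows "y = ((r + a) / r) *\<^sub>R u"
proof -
  have "norm y - norm u \<le> norm (y - u)" by (rule norm_triangle_ineq2)
  then have "norm (y - u) = a" using assms by (simp add: dist_norm)
  moreover have "norm ((y - u) + u) = norm (y - u) + norm u" using assms \<open>norm (y - u) = a\<close> by simp
  ultimately have "a *\<^sub>R u = r *\<^sub>R (y - u)"
    using norm_triangle_eq[of "y - u" u] assms(1) by simp
  then have "r *\<^sub>R y = (r + a) *\<^sub>R u" by (simp add: algebra_simps)
  then have "(1 / r) *\<^sub>R (r *\<^sub>R y) = ((r + a) / r) *\<^sub>R u" by simp
  then show ?thesis using assms(2) by simp
qed

lemma measure_sphere_unif_cball_gap: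
  assumes "norm u = r" "r > 0" "a \<ge> 0"
  shows "measure (sphere_unif (r + a)) (cball u a) = 0"
proof -
  define S where "S = cball 0 1 \<inter> (\<lambda>x. ((r + a) / norm x) *\<^sub>R x) -` cball u a"
  have "S \<subseteq> span {u}"
  proof
    fix x assume "x \<in> S"
    show "x \<in> span {u}"
    proof (cases "x = 0")
      case False
      define y where "y = ((r + a) / norm x) *\<^sub>R x"
      have "norm y = r + a" "dist y u \<le> a"
        using False assms \<open>x \<in> S\<close> by (auto simp: y_def S_def dist_commute)
      then have "y = ((r + a) / r) *\<^sub>R u" using assms by (intro sphere_point_within_gap_eq)
      moreover have "x = (norm x / (r + a)) *\<^sub>R y" using False assms by (simp add: y_def)
      ultimately have "x = (norm x / (r + a) * ((r + a) / r)) *\<^sub>R u" by simp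
      then show ?thesis by (metis span_base span_mul singletonI)
    qed (simp add: span_zero)
  qed
  moreover have "negligible (span {u})"
    using dim_le_card[of "{u}" "span {u}"] by (intro negligible_lowdim) auto
  ultimately have "measure lebesgue S = 0"
    using negligible_subset negligible_imp_measure0 by blast
  moreover have "S \<in> sets borel"
    unfolding S_def by (intro sets.Int radial_projection_vimage_borel) auto
  ultimately have "measure lborel S = 0"
    by (metis measure_completion sets_lborel)
  moreover have "measure (sphere_unif (r + a)) (cball u a) = measure lborel S / measure lborel (cball (0::real^3) 1)"
    unfolding S_def by (rule measure_sphere_unif) simp
  ultimately show ?thesis by simp
qed

lemma measure_sphere_unif_cball_pos:
  assumes "norm u = r" "r > 0" "a \<ge> 0" "a < t"
  shows "measure (sphere_unif (r + a)) (cball u t) > 0"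
proof -
  define f where "f x = ((r + a) / norm x) *\<^sub>R x" for x :: "real^3"
  define x0 where "x0 = (1 / (2 * r)) *\<^sub>R u"
  have "norm x0 = 1 / 2" using assms by (simp add: x0_def)
  have "f x0 = ((r + a) / r) *\<^sub>R u" using assms \<open>norm x0 = 1 / 2\<close> by (simp add: f_def x0_def field_simps)
  moreover have "(r + a) / r - 1 = a / r" using assms by (simp add: field_simps)
  ultimately have "f x0 - u = (a / r) *\<^sub>R u" by (metis scaleR_diff_left scaleR_one)
  then have "dist (f x0) u = a" using assms by (simp add: dist_norm)
  then have "f x0 \<in> ball u t" using assms by (simp add: dist_commute)
  have "continuous_on (- {0}) f" unfolding f_def by (intro continuous_intros) auto
  then have "open (f -` ball u t \<inter> - {0})" using continuous_on_open_vimage[of "- {0}" f] by auto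
  then have "open (ball 0 1 \<inter> (- {0} \<inter> f -` ball u t))" by (simp add: Int_commute open_Int)
  moreover have "x0 \<in> ball 0 1 \<inter> (- {0} \<inter> f -` ball u t)"
    using \<open>norm x0 = 1 / 2\<close> \<open>f x0 \<in> ball u t\<close> by auto
  ultimately obtain e where "e > 0" and e: "ball x0 e \<subseteq> ball 0 1 \<inter> (- {0} \<inter> f -` ball u t)"
    by (meson openE)
  define S where "S = cball 0 1 \<inter> f -` cball u t"
  have "S \<in> sets borel"
    unfolding S_def f_def by (intro sets.Int radial_projection_vimage_borel) auto
  have "ball x0 e \<subseteq> S" using e by (auto simp: S_def)
  moreover have "S \<in> fmeasurable lborel"
  proof (rule fmeasurableI2)
    show "cball (0::real^3) 1 \<in> fmeasurable lborel"
      using emeasure_lborel_cball_finite by (intro fmeasurableI) auto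
    show "S \<in> sets lborel" using \<open>S \<in> sets borel\<close> by simp
  qed (auto simp: S_def)
  ultimately have "measure lborel (ball x0 e) \<le> measure lborel S"
    by (intro measure_mono_fmeasurable) auto
  moreover have "0 < measure lborel (ball x0 e)" using \<open>e > 0\<close> by (rule content_ball_pos)
  moreover have "0 < measure lborel (cball (0::real^3) 1)" by (rule content_cball_pos) simp
  moreover have "measure (sphere_unif (r + a)) (cball u t) = measure lborel S / measure lborel (cball (0::real^3) 1)"
    unfolding S_def f_def by (rule measure_sphere_unif) simp
  ultimately show ?thesis by (metis divide_pos_pos order_less_le_trans)
qed

subsection \<open>Nearest of independent uniform points\<close>

lemma nearest_dist_gt_iff:
  assumes "n \<ge> 1"
  shows "t < nearest_dist u n x \<longleftrightarrow> (\<forall>i<n. t < dist (x i) u)"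
  using assms unfolding nearest_dist_def by (subst Min_gr_iff) (auto simp: lessThan_empty_iff)

lemma borel_measurable_nearest_dist:
  assumes "sets M = sets borel"
  shows "nearest_dist u n \<in> borel_measurable (PiM {..<n} (\<lambda>_. M))"
  unfolding nearest_dist_def
proof (rule borel_measurable_Min)
  fix i assume "i \<in> {..<n}"
  then have "(\<lambda>x. x i) \<in> measurable (PiM {..<n} (\<lambda>_. M)) M"
    by (rule measurable_component_singleton)
  then have "(\<lambda>x. x i) \<in> borel_measurable (PiM {..<n} (\<lambda>_. M))"
    by (simp add: measurable_cong_sets[OF refl assms])
  then show "(\<lambda>x. dist (x i) u) \<in> borel_measurable (PiM {..<n} (\<lambda>_. M))"
    by (intro borel_measurable_dist measurable_const) simp_all
qed simp

lemma prob_nearest_dist_le: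
  assumes "prob_space M" "sets M = sets borel" "n \<ge> 1"
  shows "measure (PiM {..<n} (\<lambda>_. M)) {x \<in> space (PiM {..<n} (\<lambda>_. M)). nearest_dist u n x \<le> t}
    = 1 - (1 - measure M (cball u t)) ^ n"
proof -
  have space_M: "space M = UNIV" using sets_eq_imp_space_eq[OF assms(2)] by simp
  interpret M: prob_space M by fact
  interpret product_prob_space "\<lambda>_. M" "{..<n}" by unfold_locales
  interpret finite_product_prob_space "\<lambda>_. M" "{..<n}" by unfold_locales simp
  have far: "{x \<in> space (PiM {..<n} (\<lambda>_. M)). t < nearest_dist u n x} = (\<Pi>\<^sub>E i\<in>{..<n}. - cball u t)"
    (is "?far = ?box")
  proof (intro set_eqI)
    fix x
    have "\<And>y. y \<in> - cball u t \<longleftrightarrow> t < dist y u" by (simp add: dist_commute not_le)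
    then show "x \<in> ?far \<longleftrightarrow> x \<in> ?box"
      unfolding space_PiM space_M nearest_dist_gt_iff[OF assms(3)] PiE_iff by blast
  qed
  have "prob ?box = (1 - measure M (cball u t)) ^ n"
    using assms(2) prob_space.prob_compl[OF assms(1), of "cball u t"]
    by (subst prob_times) (auto simp: space_M Compl_eq_Diff_UNIV)
  moreover have "{x \<in> space (PiM {..<n} (\<lambda>_. M)). nearest_dist u n x \<le> t} = space (PiM {..<n} (\<lambda>_. M)) - ?far"
    by auto
  moreover have "?far \<in> events"
    using borel_measurable_nearest_dist[OF assms(2)]
    by (intro borel_measurable_less measurable_const) simp_all
  ultimately show ?thesis by (simp add: prob_compl far)
qed

lemma measure_pair_prob_Times:
  assumes "prob_space M1" "prob_space M2" "A \<in> sets M1" "B \<in> sets M2"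
  shows "measure (M1 \<Otimes>\<^sub>M M2) (A \<times> B) = measure M1 A * measure M2 B"
proof -
  interpret M1: prob_space M1 by fact
  interpret M2: prob_space M2 by fact
  have "emeasure (M1 \<Otimes>\<^sub>M M2) (A \<times> B) = ennreal (measure M1 A * measure M2 B)"
    using assms by (simp add: M2.emeasure_pair_measure_Times M1.emeasure_eq_measure
        M2.emeasure_eq_measure ennreal_mult'')
  then show ?thesis by (simp add: measure_def)
qed

subsection \<open>Poisson mixtures\<close>

definition poisson_weight :: "real \<Rightarrow> nat \<Rightarrow> real" where
  "poisson_weight S n = S ^ n / fact n * exp (- S)"

lemma poisson_weight_nonneg: "0 \<le> S \<Longrightarrow> 0 \<le> poisson_weight S n"
  by (simp add: poisson_weight_def)

lemma poisson_weight_affine_sums: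
  "(\<lambda>n. poisson_weight S n * (c + d * q ^ n)) sums (c + d * exp (S * (q - 1)))"
proof -
  have exp_sums: "(\<lambda>n. poisson_weight S n * x ^ n) sums exp (S * (x - 1))" for x
  proof -
    have "(\<lambda>n. (S * x) ^ n /\<^sub>R fact n * exp (- S)) sums (exp (S * x) * exp (- S))"
      by (intro sums_mult2 exp_converges)
    moreover have "exp (S * x) * exp (- S) = exp (S * (x - 1))"
      by (simp add: mult_exp_exp algebra_simps)
    ultimately show ?thesis
      by (simp add: poisson_weight_def power_mult_distrib divide_inverse mult_ac)
  qed
  have "(\<lambda>n. c * (poisson_weight S n * 1 ^ n) + d * (poisson_weight S n * q ^ n))
      sums (c * exp (S * (1 - 1)) + d * exp (S * (q - 1)))"
    by (intro sums_add sums_mult exp_sums)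
  then show ?thesis by (simp add: algebra_simps)
qed

lemma poisson_weight_sums: "poisson_weight S sums 1"
  using poisson_weight_affine_sums[of S 1 0] by simp

lemma summable_poisson_mixture:
  assumes "0 \<le> S" "\<And>n. 0 \<le> f n" "\<And>n. f n \<le> 1"
  shows "summable (\<lambda>n. poisson_weight S n * f n)"
  by (rule summable_comparison_test'[OF sums_summable[OF poisson_weight_sums], of 0])
     (use assms poisson_weight_nonneg in \<open>auto intro: mult_left_le\<close>)

lemma poisson_mixture_le:
  assumes "0 \<le> S" "\<And>n. 0 \<le> f n" "\<And>n. f n \<le> 1" "\<And>n. f n \<le> c + d * q ^ n"
  shows "(\<Sum>n. poisson_weight S n * f n) \<le> c + d * exp (S * (q - 1))"
  using assms poisson_weight_nonneg
  by (intro sums_le[OF _ summable_sums[OF summable_poisson_mixture] poisson_weight_affine_sums])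
     (auto intro: mult_left_mono)

lemma poisson_mixture_ge:
  assumes "0 \<le> S" "\<And>n. 0 \<le> f n" "\<And>n. f n \<le> 1" "\<And>n. c + d * q ^ n \<le> f n"
  shows "c + d * exp (S * (q - 1)) \<le> (\<Sum>n. poisson_weight S n * f n)"
  using assms poisson_weight_nonneg
  by (intro sums_le[OF _ poisson_weight_affine_sums summable_sums[OF summable_poisson_mixture]])
     (auto intro: mult_left_mono)

definition ppp_prob_given ::
    "real \<Rightarrow> real measure \<Rightarrow> (nat \<Rightarrow> (nat \<Rightarrow> real^3) \<Rightarrow> real \<Rightarrow> bool) \<Rightarrow> nat \<Rightarrow> real" where
  "ppp_prob_given \<rho> Mh E n =
     measure (PiM {..<n} (\<lambda>_. sphere_unif \<rho>) \<Otimes>\<^sub>M Mh)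
       {p \<in> space (PiM {..<n} (\<lambda>_. sphere_unif \<rho>) \<Otimes>\<^sub>M Mh). E n (fst p) (snd p)}"

lemma ppp_prob_eq_poisson_mixture:
  "ppp_prob S \<rho> Mh E = (\<Sum>n. poisson_weight S n * ppp_prob_given \<rho> Mh E n)"
  by (simp add: ppp_prob_def ppp_prob_given_def poisson_weight_def)

lemma ppp_prob_given_le_1: "prob_space Mh \<Longrightarrow> ppp_prob_given \<rho> Mh E n \<le> 1"
  unfolding ppp_prob_given_def
  by (intro prob_space.prob_le_1 prob_space_pair prob_space_PiM prob_space_sphere_unif)

lemma ppp_prob_le:
  assumes "prob_space Mh" "0 \<le> S" "\<And>n. ppp_prob_given \<rho> Mh E n \<le> c + d * q ^ n"
  shows "ppp_prob S \<rho> Mh E \<le> c + d * exp (S * (q - 1))"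
  unfolding ppp_prob_eq_poisson_mixture
  using assms ppp_prob_given_le_1 by (intro poisson_mixture_le) (auto simp: ppp_prob_given_def)

lemma ppp_prob_ge:
  assumes "prob_space Mh" "0 \<le> S" "\<And>n. c + d * q ^ n \<le> ppp_prob_given \<rho> Mh E n"
  shows "c + d * exp (S * (q - 1)) \<le> ppp_prob S \<rho> Mh E"
  unfolding ppp_prob_eq_poisson_mixture
  using assms ppp_prob_given_le_1 by (intro poisson_mixture_ge) (auto simp: ppp_prob_given_def)

subsection \<open>Outage probability of the nearest satellite\<close>

text \<open>
  In the application \<open>N\<close> and \<open>D\<close> are the outage and coverage probabilities, \<open>G t\<close> is the
  fading CDF at the outage threshold for distance \<open>t\<close>, and \<open>V t\<close> is the probability that no
  satellite lies within distance \<open>t\<close>.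
\<close>

lemma tendsto_ratio_squeeze:
  fixes N D G :: "real \<Rightarrow> real" and V :: "real \<Rightarrow> real \<Rightarrow> real"
  assumes G: "(G \<longlongrightarrow> G a) (at_right a)" and "a < d"
    and V: "\<And>t. a < t \<Longrightarrow> (V t \<longlongrightarrow> 0) at_top"
    and N_nonneg: "\<And>S. 0 \<le> S \<Longrightarrow> 0 \<le> N S"
    and D_le: "\<And>S. 0 \<le> S \<Longrightarrow> D S \<le> 1"
    and N_ge: "\<And>S t. 0 \<le> S \<Longrightarrow> a < t \<Longrightarrow> t \<le> d \<Longrightarrow> G a - G a * V t S \<le> N S"
    and N_le: "\<And>S t. 0 \<le> S \<Longrightarrow> a < t \<Longrightarrow> t \<le> d \<Longrightarrow> N S \<le> G t + V t S"
    and D_ge: "\<And>S t. 0 \<le> S \<Longrightarrow> a < t \<Longrightarrow> t \<le> d \<Longrightarrow> 1 - V t S \<le> D S"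
  shows "((\<lambda>S. N S / D S) \<longlongrightarrow> G a) at_top"
proof (rule order_tendstoI)
  have S_nonneg: "eventually (\<lambda>S::real. 0 \<le> S) at_top" by (rule eventually_ge_at_top)
  fix l assume "l < G a"
  have "((\<lambda>S. G a - G a * V d S) \<longlongrightarrow> G a - G a * 0) at_top"
    by (intro tendsto_intros V \<open>a < d\<close>)
  then have "eventually (\<lambda>S. l < G a - G a * V d S) at_top"
    using \<open>l < G a\<close> by (intro order_tendstoD(1)) simp_all
  moreover have "eventually (\<lambda>S. V d S < 1) at_top"
    by (intro order_tendstoD(2)[OF V] \<open>a < d\<close>) simp
  ultimately show "eventually (\<lambda>S. l < N S / D S) at_top"
    using S_nonneg
  proof eventually_elim
    case (elim S)
    then have "0 < D S" using D_ge[of S d] \<open>a < d\<close> by fastforce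
    then have "N S \<le> N S / D S"
      using N_nonneg[of S] D_le[of S] elim by (simp add: le_divide_eq mult_left_le)
    then show ?case using N_ge[of S d] \<open>a < d\<close> elim by fastforce
  qed
next
  have S_nonneg: "eventually (\<lambda>S::real. 0 \<le> S) at_top" by (rule eventually_ge_at_top)
  fix l assume "G a < l"
  have "eventually (\<lambda>t. G t < l \<and> t < d \<and> a < t) (at_right a)"
    using order_tendstoD(2)[OF G \<open>G a < l\<close>] order_tendstoD(2)[OF tendsto_ident_at \<open>a < d\<close>]
      eventually_at_right_less
    by eventually_elim simp
  then obtain t where t: "G t < l" "a < t" "t \<le> d"
    using eventually_happens'[of "at_right a"] by fastforce
  have "((\<lambda>S. (G t + V t S) / (1 - V t S)) \<longlongrightarrow> (G t + 0) / (1 - 0)) at_top"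
    by (intro tendsto_intros V t) simp
  then have "eventually (\<lambda>S. (G t + V t S) / (1 - V t S) < l) at_top"
    using t by (intro order_tendstoD(2)) simp_all
  moreover have "eventually (\<lambda>S. V t S < 1) at_top"
    by (intro order_tendstoD(2)[OF V] t) simp
  ultimately show "eventually (\<lambda>S. N S / D S < l) at_top"
    using S_nonneg
  proof eventually_elim
    case (elim S)
    have "N S / D S \<le> (G t + V t S) / (1 - V t S)"
      using elim t N_nonneg[of S] N_le[of S t] D_ge[of S t] by (intro frac_le) auto
    then show ?case using elim by simp
  qed
qed

text \<open>
  \<open>outage D h\<close> says that the link to a satellite at distance \<open>D\<close> with fading \<open>h\<close> is in outage;
  only its behaviour on the main lobe \<open>a < D \<le> dth\<close> and for \<open>h > 0\<close> matters, since the fading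
  is almost surely positive (\<open>cdf Mh 0 = 0\<close>).
\<close>

locale nearest_satellite_outage = Mh: real_distribution Mh
  for Mh :: "real measure" +
  fixes re a dmax dth w1 \<alpha> :: real and u :: "real^3" and outage :: "real \<Rightarrow> real \<Rightarrow> bool"
  assumes re_pos: "0 < re" and a_pos: "0 < a" and norm_u: "norm u = re"
    and a_less_dth: "a < dth" and dth_le_dmax: "dth \<le> dmax"
    and alpha_pos: "0 < \<alpha>" and w1_nonneg: "0 \<le> w1"
    and fading_pos: "cdf Mh 0 = 0"
    and outage_measurable: "Measurable.pred (borel \<Otimes>\<^sub>M borel) (\<lambda>(D, h). outage D h)"
    and outage_iff: "\<And>D h. a < D \<Longrightarrow> D \<le> dth \<Longrightarrow> 0 < h \<Longrightarrow> outage D h \<longleftrightarrow> h < w1 * D powr \<alpha>"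
begin

definition coverage_event :: "nat \<Rightarrow> (nat \<Rightarrow> real^3) \<Rightarrow> real \<Rightarrow> bool" where
  "coverage_event n x h \<longleftrightarrow> n \<ge> 1 \<and> nearest_dist u n x \<le> dmax"

definition outage_event :: "nat \<Rightarrow> (nat \<Rightarrow> real^3) \<Rightarrow> real \<Rightarrow> bool" where
  "outage_event n x h \<longleftrightarrow> n \<ge> 1 \<and> nearest_dist u n x \<le> dmax \<and> outage (nearest_dist u n x) h"

abbreviation cap_prob :: "real \<Rightarrow> real" where
  "cap_prob t \<equiv> measure (sphere_unif (re + a)) (cball u t)"

abbreviation points :: "nat \<Rightarrow> (nat \<Rightarrow> real^3) measure" where
  "points n \<equiv> PiM {..<n} (\<lambda>_. sphere_unif (re + a))"

abbreviation sample :: "nat \<Rightarrow> ((nat \<Rightarrow> real^3) \<times> real) measure" where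
  "sample n \<equiv> points n \<Otimes>\<^sub>M Mh"

lemma prob_space_points: "prob_space (points n)"
  by (intro prob_space_PiM prob_space_sphere_unif)

lemma prob_space_sample: "prob_space (sample n)"
  by (intro prob_space_pair prob_space_points Mh.prob_space_axioms)

lemma space_sample: "space (sample n) = space (points n) \<times> UNIV"
  by (simp add: space_pair_measure)

lemma measure_sample_Times:
  "A \<in> sets (points n) \<Longrightarrow> B \<in> sets borel \<Longrightarrow>
    measure (sample n) (A \<times> B) = measure (points n) A * measure Mh B"
  by (intro measure_pair_prob_Times prob_space_points Mh.prob_space_axioms) simp_all

lemma borel_measurable_nearest_dist_points: "nearest_dist u n \<in> borel_measurable (points n)"
  by (intro borel_measurable_nearest_dist sets_sphere_unif)

lemma sets_nearest_dist_le: "{x \<in> space (points n). nearest_dist u n x \<le> t} \<in> sets (points n)"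
  using borel_measurable_nearest_dist_points by (intro borel_measurable_le measurable_const) simp_all

lemma sets_nearest_dist_gt: "{x \<in> space (points n). t < nearest_dist u n x} \<in> sets (points n)"
  using borel_measurable_nearest_dist_points by (intro borel_measurable_less measurable_const) simp_all

lemma prob_nearest_dist_gt:
  assumes "n \<ge> 1"
  shows "measure (points n) {x \<in> space (points n). t < nearest_dist u n x} = (1 - cap_prob t) ^ n"
proof -
  interpret prob_space "points n" by (rule prob_space_points)
  have "{x \<in> space (points n). t < nearest_dist u n x}
      = space (points n) - {x \<in> space (points n). nearest_dist u n x \<le> t}" by auto
  then show ?thesis
    using prob_nearest_dist_le[OF prob_space_sphere_unif sets_sphere_unif assms]
    by (simp add: prob_compl sets_nearest_dist_le)
qed

lemma borel_measurable_snd_sample: "snd \<in> borel_measurable (sample n)"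
  using measurable_snd[of "points n" Mh] by (simp add: measurable_cong_sets[OF refl Mh.events_eq_borel])

lemma sets_coverage_event:
  "{p \<in> space (sample n). coverage_event n (fst p) (snd p)} \<in> sets (sample n)"
  unfolding coverage_event_def
  using measurable_compose[OF measurable_fst borel_measurable_nearest_dist_points] by measurable

lemma sets_outage_event:
  "{p \<in> space (sample n). outage_event n (fst p) (snd p)} \<in> sets (sample n)"
proof -
  have "(\<lambda>p. (nearest_dist u n (fst p), snd p)) \<in> measurable (sample n) (borel \<Otimes>\<^sub>M borel)"
    using measurable_compose[OF measurable_fst borel_measurable_nearest_dist_points] borel_measurable_snd_sample
    by (rule measurable_Pair)
  then have "Measurable.pred (sample n) (\<lambda>p. (\<lambda>(D, h). outage D h) (nearest_dist u n (fst p), snd p))"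
    by (rule measurable_compose[OF _ outage_measurable])
  then have "Measurable.pred (sample n) (\<lambda>p. outage (nearest_dist u n (fst p)) (snd p))"
    by simp
  then show ?thesis
    unfolding outage_event_def
    using measurable_compose[OF measurable_fst borel_measurable_nearest_dist_points] by measurable
qed

lemma cap_prob_gap: "cap_prob a = 0"
  using measure_sphere_unif_cball_gap[OF norm_u re_pos] a_pos by simp

lemma cap_prob_pos: "a < t \<Longrightarrow> 0 < cap_prob t"
  using measure_sphere_unif_cball_pos[OF norm_u re_pos] a_pos by simp

lemma measure_fading_Ioc: "0 \<le> x \<Longrightarrow> measure Mh {0<..x} = cdf Mh x"
  using Mh.cdf_diff_eq[of 0 x] fading_pos by (cases "x = 0") simp_all

lemma prob_fading_UNIV: "measure Mh UNIV = 1"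
  using Mh.prob_space by simp

lemma coverage_given_ge:
  assumes "t \<le> dmax"
  shows "1 - (1 - cap_prob t) ^ n \<le> ppp_prob_given (re + a) Mh coverage_event n"
proof (cases "n = 0")
  case True
  then show ?thesis by (simp add: ppp_prob_given_def)
next
  case False
  interpret S: prob_space "sample n" by (rule prob_space_sample)
  let ?near = "{x \<in> space (points n). nearest_dist u n x \<le> t}"
  have "?near \<times> UNIV \<subseteq> {p \<in> space (sample n). coverage_event n (fst p) (snd p)}"
    using assms False by (auto simp: space_sample coverage_event_def)
  then have "measure (sample n) (?near \<times> UNIV) \<le> ppp_prob_given (re + a) Mh coverage_event n"
    unfolding ppp_prob_given_def by (intro S.finite_measure_mono sets_coverage_event)
  moreover have "measure (sample n) (?near \<times> UNIV) = 1 - (1 - cap_prob t) ^ n"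
    using False sets_nearest_dist_le
    by (simp add: measure_sample_Times prob_nearest_dist_le[OF prob_space_sphere_unif] prob_fading_UNIV)
  ultimately show ?thesis by simp
qed

lemma outage_imp_fading_le:
  assumes "a < D" "D \<le> t" "t \<le> dth" "outage D h"
  shows "h \<le> w1 * t powr \<alpha>"
proof (cases "0 < h")
  case True
  then have "h < w1 * D powr \<alpha>" using outage_iff assms by simp
  also have "\<dots> \<le> w1 * t powr \<alpha>"
    using assms a_pos alpha_pos w1_nonneg by (intro mult_left_mono powr_mono2) auto
  finally show ?thesis by simp
next
  case False
  moreover have "0 \<le> w1 * t powr \<alpha>" using w1_nonneg by simp
  ultimately show ?thesis by simp
qed

lemma fading_le_imp_outage:
  assumes "a < D" "D \<le> dth" "0 < h" "h \<le> w1 * a powr \<alpha>"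
  shows "outage D h"
proof -
  have "0 < w1" using assms a_pos w1_nonneg by (smt (verit) mult_nonpos_nonneg powr_ge_zero)
  then have "w1 * a powr \<alpha> < w1 * D powr \<alpha>"
    using assms a_pos alpha_pos by (intro mult_strict_left_mono powr_less_mono2) auto
  then show ?thesis using outage_iff assms by simp
qed

lemma outage_given_le:
  assumes "a < t" "t \<le> dth"
  shows "ppp_prob_given (re + a) Mh outage_event n \<le> cdf Mh (w1 * t powr \<alpha>) + (1 - cap_prob t) ^ n"
proof (cases "n = 0")
  case True
  then show ?thesis using Mh.cdf_nonneg by (simp add: ppp_prob_given_def outage_event_def)
next
  case False
  interpret S: prob_space "sample n" by (rule prob_space_sample)
  let ?low = "space (points n) \<times> {..w1 * t powr \<alpha>}"
  let ?far = "{x \<in> space (points n). t < nearest_dist u n x} \<times> UNIV"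
  let ?gap = "{x \<in> space (points n). nearest_dist u n x \<le> a} \<times> UNIV"
  have sets: "?low \<in> sets (sample n)" "?far \<in> sets (sample n)" "?gap \<in> sets (sample n)"
    using sets_nearest_dist_gt sets_nearest_dist_le by (auto intro: pair_measureI)
  have "{p \<in> space (sample n). outage_event n (fst p) (snd p)} \<subseteq> ?low \<union> ?far \<union> ?gap"
    using outage_imp_fading_le[OF _ _ assms(2)]
    by (fastforce simp: space_sample outage_event_def not_less)
  then have "ppp_prob_given (re + a) Mh outage_event n \<le> measure (sample n) (?low \<union> ?far \<union> ?gap)"
    unfolding ppp_prob_given_def using sets by (intro S.finite_measure_mono) auto
  also have "\<dots> \<le> measure (sample n) ?low + measure (sample n) ?far + measure (sample n) ?gap"
    using sets by (intro order.trans[OF measure_Un_le] add_right_mono measure_Un_le) auto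
  also have "\<dots> = cdf Mh (w1 * t powr \<alpha>) + (1 - cap_prob t) ^ n"
    using False sets_nearest_dist_gt sets_nearest_dist_le
    by (simp add: measure_sample_Times prob_space.prob_space[OF prob_space_points] prob_fading_UNIV
        prob_nearest_dist_gt prob_nearest_dist_le[OF prob_space_sphere_unif] cap_prob_gap cdf_def)
  finally show ?thesis .
qed

lemma outage_given_ge:
  assumes "a < t" "t \<le> dth"
  shows "cdf Mh (w1 * a powr \<alpha>) - cdf Mh (w1 * a powr \<alpha>) * (1 - cap_prob t) ^ n
    \<le> ppp_prob_given (re + a) Mh outage_event n"
proof (cases "n = 0")
  case True
  then show ?thesis by (simp add: ppp_prob_given_def)
next
  case False
  interpret S: prob_space "sample n" by (rule prob_space_sample)
  interpret P: prob_space "points n" by (rule prob_space_points)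
  let ?near = "\<lambda>r. {x \<in> space (points n). nearest_dist u n x \<le> r}"
  let ?good = "(?near t - ?near a) \<times> {0<..w1 * a powr \<alpha>}"
  have "?good \<subseteq> {p \<in> space (sample n). outage_event n (fst p) (snd p)}"
    using False assms dth_le_dmax fading_le_imp_outage
    by (auto simp: space_sample outage_event_def not_le)
  then have good_le: "measure (sample n) ?good \<le> ppp_prob_given (re + a) Mh outage_event n"
    unfolding ppp_prob_given_def by (intro S.finite_measure_mono sets_outage_event)
  have "measure (points n) (?near t - ?near a) = 1 - (1 - cap_prob t) ^ n"
    using False assms sets_nearest_dist_le
    by (subst P.finite_measure_Diff) (auto simp: prob_nearest_dist_le[OF prob_space_sphere_unif] cap_prob_gap)
  moreover have "measure Mh {0<..w1 * a powr \<alpha>} = cdf Mh (w1 * a powr \<alpha>)"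
    using w1_nonneg by (intro measure_fading_Ioc) simp
  ultimately have "measure (sample n) ?good = (1 - (1 - cap_prob t) ^ n) * cdf Mh (w1 * a powr \<alpha>)"
    using sets_nearest_dist_le by (simp add: measure_sample_Times sets.Diff)
  with good_le show ?thesis by (simp add: algebra_simps)
qed

lemma right_continuous_fading_threshold:
  "((\<lambda>t. cdf Mh (w1 * t powr \<alpha>)) \<longlongrightarrow> cdf Mh (w1 * a powr \<alpha>)) (at_right a)"
proof -
  let ?f = "\<lambda>t. w1 * t powr \<alpha>"
  have "continuous (at a within {a<..}) ?f"
    using a_pos by (intro continuous_intros) auto
  moreover have "continuous (at (?f a) within ?f ` {a<..}) (cdf Mh)"
  proof (rule continuous_within_subset)
    show "continuous (at (?f a) within {?f a..}) (cdf Mh)"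
      unfolding at_within_Ici_at_right by (rule Mh.cdf_is_right_cont)
    show "?f ` {a<..} \<subseteq> {?f a..}"
    proof
      fix y assume "y \<in> ?f ` {a<..}"
      then obtain t where "a < t" "y = ?f t" by auto
      then show "y \<in> {?f a..}" using a_pos alpha_pos w1_nonneg by (simp add: mult_left_mono powr_mono2)
    qed
  qed
  ultimately show ?thesis
    using continuous_within_compose2[of a "{a<..}" ?f "cdf Mh"] by (simp add: continuous_within)
qed

lemma void_prob_tendsto_zero:
  assumes "a < t"
  shows "((\<lambda>S. exp (- S * cap_prob t)) \<longlongrightarrow> 0) at_top"
proof -
  have "filterlim (\<lambda>S. cap_prob t * S) at_top at_top"
    using cap_prob_pos[OF assms] by (intro filterlim_tendsto_pos_mult_at_top filterlim_ident) simp_all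
  then have "filterlim (\<lambda>S. - S * cap_prob t) at_bot at_top"
    by (simp add: filterlim_uminus_at_top mult.commute)
  then show ?thesis by (rule filterlim_compose[OF exp_at_bot])
qed

theorem outage_prob_tendsto:
  "((\<lambda>S. ppp_prob S (re + a) Mh outage_event / ppp_prob S (re + a) Mh coverage_event)
     \<longlongrightarrow> cdf Mh (w1 * a powr \<alpha>)) at_top"
proof (rule tendsto_ratio_squeeze[OF right_continuous_fading_threshold a_less_dth void_prob_tendsto_zero])
  fix S t :: real assume S: "0 \<le> S"
  note fading = Mh.prob_space_axioms
  show "0 \<le> ppp_prob S (re + a) Mh outage_event"
    using ppp_prob_ge[OF fading S, of 0 0] by (simp add: ppp_prob_given_def)
  show "ppp_prob S (re + a) Mh coverage_event \<le> 1"
    using ppp_prob_le[OF fading S, of _ _ 1 0] ppp_prob_given_le_1[OF fading] by simp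
  assume t: "a < t" "t \<le> dth"
  show "1 - exp (- S * cap_prob t) \<le> ppp_prob S (re + a) Mh coverage_event"
    using ppp_prob_ge[OF fading S, of 1 "-1" "1 - cap_prob t"] coverage_given_ge t dth_le_dmax
    by simp
  show "ppp_prob S (re + a) Mh outage_event \<le> cdf Mh (w1 * t powr \<alpha>) + exp (- S * cap_prob t)"
    using ppp_prob_le[OF fading S, of _ _ _ 1 "1 - cap_prob t"] outage_given_le[OF t] by simp
  show "cdf Mh (w1 * a powr \<alpha>) - cdf Mh (w1 * a powr \<alpha>) * exp (- S * cap_prob t)
      \<le> ppp_prob S (re + a) Mh outage_event"
    using ppp_prob_ge[OF fading S, of "cdf Mh (w1 * a powr \<alpha>)" "- cdf Mh (w1 * a powr \<alpha>)" "1 - cap_prob t"]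
      outage_given_ge[OF t] by simp
qed

end

lemma lower_inc_gamma_zero: "lower_inc_gamma s 0 = 0"
proof -
  have "AE x in lborel. indicator {0..0::real} x *\<^sub>R (x powr (s - 1) * exp (- x)) = 0"
    using AE_lborel_singleton[of 0] by eventually_elim auto
  then show ?thesis
    unfolding lower_inc_gamma_def set_lebesgue_integral_def by (rule integral_eq_zero_AE)
qed

lemma sr_cdf_zero: "sr_cdf b m \<Omega> 0 = 0"
  by (simp add: sr_cdf_def lower_inc_gamma_zero)

lemma snr_outage_iff:
  fixes P g G Gr N0 W fc c h D \<alpha> R :: real
  assumes "0 < P" "0 < g" "0 < G" "0 < Gr" "0 < N0" "0 < W" "0 < fc" "0 < c" "0 < h" "0 < D"
  shows "log 2 (1 + P * g * G * Gr * h * (c / (4 * pi * fc))\<^sup>2 * D powr (- \<alpha>) / (N0 * W)) < R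
    \<longleftrightarrow> h < 16 * pi\<^sup>2 * fc\<^sup>2 * N0 * W * (2 powr R - 1) / (P * g * c\<^sup>2 * G * Gr) * D powr \<alpha>"
proof -
  define K where "K = P * g * G * Gr * (c / (4 * pi * fc))\<^sup>2 / (N0 * W)"
  have "0 < K" using assms by (simp add: K_def)
  have snr: "P * g * G * Gr * h * (c / (4 * pi * fc))\<^sup>2 * D powr (- \<alpha>) / (N0 * W) = K * h / D powr \<alpha>"
    by (simp add: K_def powr_minus field_simps)
  have w1: "16 * pi\<^sup>2 * fc\<^sup>2 * N0 * W * (2 powr R - 1) / (P * g * c\<^sup>2 * G * Gr) = (2 powr R - 1) / K"
    using assms by (simp add: K_def field_simps power2_eq_square)
  have "0 < K * h / D powr \<alpha>" using \<open>0 < K\<close> assms by simp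
  then have "log 2 (1 + K * h / D powr \<alpha>) < R \<longleftrightarrow> 1 + K * h / D powr \<alpha> < 2 powr R"
    by (intro log_less_iff) auto
  also have "\<dots> \<longleftrightarrow> h < (2 powr R - 1) / K * D powr \<alpha>"
    using \<open>0 < K\<close> assms by (simp add: field_simps)
  finally show ?thesis by (simp only: snr w1)
qed

theorem corollary2:
  fixes r\<^sub>e a \<theta>min \<omega>th b m \<Omega> P g Gml Gsl Gr N0 W fc c \<alpha> R :: real
    and u :: "real^3" and Mh :: "real measure"
    and dmax \<psi>th dth w1 :: real
    and Pout :: "real \<Rightarrow> real"
  assumes "r\<^sub>e > 0" "a > 0" "norm u = r\<^sub>e"
    and "\<theta>min > 0" "\<omega>th > 0"
    and "dmax = sqrt (r\<^sub>e\<^sup>2 * (sin \<theta>min)\<^sup>2 + a\<^sup>2 + 2 * r\<^sub>e * a) - r\<^sub>e * sin \<theta>min"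
    and "\<psi>th = arcsin ((r\<^sub>e + a) / r\<^sub>e * sin \<omega>th) - \<omega>th"
    and "dth = sqrt (r\<^sub>e\<^sup>2 + (r\<^sub>e + a)\<^sup>2 - 2 * r\<^sub>e * (r\<^sub>e + a) * cos \<psi>th)"
    and "a < dth" "dth \<le> dmax"
    and "b > 0" "m > 0" "\<Omega> > 0"
    and "prob_space Mh" "sets Mh = sets borel"
    and "\<And>x. measure Mh {..x} = sr_cdf b m \<Omega> x"
    and "P > 0" "g > 0" "Gml > 0" "Gsl > 0" "Gr > 0" "N0 > 0" "W > 0" "fc > 0" "c > 0" "\<alpha> > 0"
    and "R \<ge> 0"
    and "w1 = 16 * pi\<^sup>2 * fc\<^sup>2 * N0 * W * (2 powr R - 1) / (P * g * c\<^sup>2 * Gml * Gr)"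
    and "\<And>S. Pout S =
      ppp_prob S (r\<^sub>e + a) Mh
        (\<lambda>n x h. n \<ge> 1 \<and> nearest_dist u n x \<le> dmax \<and>
           log 2 (1 + P * g * (if nearest_dist u n x \<le> dth then Gml else Gsl) * Gr * h
                       * (c / (4 * pi * fc))\<^sup>2 * nearest_dist u n x powr (- \<alpha>) / (N0 * W)) < R)
      / ppp_prob S (r\<^sub>e + a) Mh (\<lambda>n x h. n \<ge> 1 \<and> nearest_dist u n x \<le> dmax)"
  shows "(Pout \<longlongrightarrow>
           sr_K b m \<Omega> * (\<Sum>n. pochhammer m n * sr_delta b m \<Omega> ^ n * (2 * b) ^ (1 + n) / (fact n)\<^sup>2
              * lower_inc_gamma (1 + real n) (w1 * a powr \<alpha> / (2 * b)))) at_top"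
proof -
  define outage where "outage D h \<longleftrightarrow> log 2 (1 + P * g * (if D \<le> dth then Gml else Gsl) * Gr * h
    * (c / (4 * pi * fc))\<^sup>2 * D powr (- \<alpha>) / (N0 * W)) < R" for D h
  have cdf_Mh: "cdf Mh = sr_cdf b m \<Omega>" using assms(16) by (simp add: fun_eq_iff cdf_def)
  have "1 \<le> 2 powr R" using assms(27) by (intro ge_one_powr_ge_zero) simp_all
  then have w1_nonneg: "0 \<le> w1"
    unfolding assms(28) using assms(17-25) by (intro divide_nonneg_pos mult_nonneg_nonneg) auto
  have "real_distribution Mh"
    using assms(14,15) by (intro real_distribution.intro real_distribution_axioms.intro)
  moreover have "Measurable.pred (borel \<Otimes>\<^sub>M borel) (\<lambda>(D, h). outage D h)"
    unfolding outage_def by measurable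
  moreover have "outage D h \<longleftrightarrow> h < w1 * D powr \<alpha>" if "a < D" "D \<le> dth" "0 < h" for D h
    using that assms(2,17-25,28) snr_outage_iff[of P g Gml Gr N0 W fc c h D \<alpha> R]
    by (simp add: outage_def)
  ultimately interpret nearest_satellite_outage Mh r\<^sub>e a dmax dth w1 \<alpha> u outage
    using w1_nonneg assms(1-3,9,10,26) cdf_Mh sr_cdf_zero
    by (intro nearest_satellite_outage.intro nearest_satellite_outage_axioms.intro) auto
  have "Pout = (\<lambda>S. ppp_prob S (r\<^sub>e + a) Mh outage_event / ppp_prob S (r\<^sub>e + a) Mh coverage_event)"
    using assms(29)
    by (simp add: fun_eq_iff outage_def outage_event_def[abs_def] coverage_event_def[abs_def])
  with outage_prob_tendsto show ?thesis by (simp add: cdf_Mh sr_cdf_def)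
qed

end
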